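(* Consider the Decaying-$\epsilon$-FOCuS procedure (described in the context) on $M>1$ streams, where stream 1 has a change-point at $\nu=0$ (every observation of stream 1 is $\mathcal{N}(\mu_1,1)$ with $\mu_1\ne0$, all other observations $\mathcal{N}(0,1)$). Then for every $t\ge1$, $$\mathbb{P}_{M,0}\left(T_t^{(2)}\ge T_t^{(1)},\ T_t^{(1)}\ge\frac{\mu_1^2t^{2/3}}{8}\right)\le t(t+1)\exp\left(-\frac{\mu_1^2t^{2/3}}{8}\right).$$
   Context: Setting: there are $M$ independent data streams. At each time $t=1,2,\dots$ an agent selects one stream $A_t\in\{1,\dots,M\}$ and observes one value $X_t\in\mathbb{R}$ from it. The $i$-th observation taken from stream $m$ is denoted $X_i^{(m)}$. Pre-change observations are $\mathcal{N}(0,1)$. Stream 1 has a change-point $\nu$: if $A_t=1$ and $t>\nu$ then $X_t\sim\mathcal{N}(\mu_1,1)$ with $\mu_1\neq0$; otherwise $X_t\sim\mathcal{N}(0,1)$; observations are conditionally independent given the selections. $\mathbb{P}_{M,\nu}$ denotes probability for $M$ streams with change at $\nu$ in stream 1. $\mathcal{F}_t=\sigma(A_1,X_1,\dots,A_t,X_t)$. The sampling process and statistics are defined for all $t\ge 0$. Decaying-$\epsilon$-FOCuS: let $N_t^{(m)}$ be the number of times stream $m$ was selected up to and including time $t$. The local GLR statistic is $T_t^{(m)}=\max_{0\le k<N_t^{(m)}}\frac{(\sum_{i=k+1}^{N_t^{(m)}}X_i^{(m)})^2}{2(N_t^{(m)}-k)}$ (and $T_t^{(m)}=0$ if $N_t^{(m)}=0$);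 $M_t=\arg\max_m T_t^{(m)}$. The local change-point estimate $\hat\nu_t^{(m)}$ is the time at which stream $m$'s $\hat k$-th observation was taken, where $\hat k$ is the maximizing index $k$ in $T_t^{(m)}$ (time $0$ if $\hat k=0$ or $N_t^{(m)}=0$); the global estimate is $\hat\nu_t=\hat\nu_t^{(M_t)}$; ties are broken uniformly at random. Initially $\hat\nu_0=0$, $M_0$ uniform on $[M]$. At time $t$, set $\epsilon_t=\min\{1, M/\max(1,t-\hat\nu_{t-1})^{1/3}\}$, draw $G_t\sim\mathrm{Bernoulli}(\epsilon_t)$ (conditionally on $\mathcal{F}_{t-1}$); if $G_t=1$ choose $A_t$ uniformly from $[M]$, otherwise $A_t=M_{t-1}$; then observe $X_t$ and update the statistics. *)

theory Defs
  imports "HOL-Probability.Probability"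
begin

text \<open>Underlying randomness: Inl (m,i) is the i-th observation taken from stream m (i >= 1);
  Inr (j,s) are auxiliary uniform [0,1] variables at time s: j=0 exploration coin G_s,
  j=1 uniform stream choice, j=2 uniform tie-breaking for M_s.\<close>

type_synonym focus_idx = "(nat \<times> nat) + (nat \<times> nat)"

definition focus_index :: "nat \<Rightarrow> focus_idx set" where
  "focus_index M = {Inl (m, i) | m i. m \<in> {1..M} \<and> 1 \<le> i} \<union> {Inr (j, s) | j s. j < (3::nat)}"

definition obsv :: "(focus_idx \<Rightarrow> real) \<Rightarrow> nat \<Rightarrow> nat \<Rightarrow> real" where
  "obsv z m i = z (Inl (m, i))"

definition unif :: "(focus_idx \<Rightarrow> real) \<Rightarrow> nat \<Rightarrow> nat \<Rightarrow> real" where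
  "unif z j s = z (Inr (j, s))"

definition glr_val :: "(nat \<Rightarrow> nat \<Rightarrow> real) \<Rightarrow> nat \<Rightarrow> nat \<Rightarrow> nat \<Rightarrow> real" where
  "glr_val Y m n k = (\<Sum>i\<in>{k+1..n}. Y m i)\<^sup>2 / (2 * real (n - k))"

definition glr :: "(nat \<Rightarrow> nat \<Rightarrow> real) \<Rightarrow> nat \<Rightarrow> nat \<Rightarrow> real" where
  "glr Y m n = (if n = 0 then 0 else Max (glr_val Y m n ` {..<n}))"

text \<open>Maximising index (smallest one; ties among k have probability zero).\<close>
definition argk :: "(nat \<Rightarrow> nat \<Rightarrow> real) \<Rightarrow> nat \<Rightarrow> nat \<Rightarrow> nat" where
  "argk Y m n = (if n = 0 then 0 else (LEAST k. k < n \<and> glr_val Y m n k = glr Y m n))"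

definition cnt :: "nat list \<Rightarrow> nat \<Rightarrow> nat" where
  "cnt As m = length (filter (\<lambda>a. a = m) As)"

text \<open>Time at which the k-th observation of stream m was taken (0 if k = 0).\<close>
definition obs_time :: "nat list \<Rightarrow> nat \<Rightarrow> nat \<Rightarrow> nat" where
  "obs_time As m k = (if k = 0 then 0 else (LEAST s. cnt (take s As) m = k))"

text \<open>Uniform choice from a finite nonempty set of naturals using w uniform on [0,1].\<close>
definition pick :: "nat set \<Rightarrow> real \<Rightarrow> nat" where
  "pick S w = sorted_list_of_set S ! min (card S - 1) (nat \<lfloor>w * real (card S)\<rfloor>)"

definition Tstat :: "(focus_idx \<Rightarrow> real) \<Rightarrow> nat list \<Rightarrow> nat \<Rightarrow> real" where
  "Tstat z As m = glr (obsv z) m (cnt As m)"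

definition maxset :: "(focus_idx \<Rightarrow> real) \<Rightarrow> nat \<Rightarrow> nat list \<Rightarrow> nat set" where
  "maxset z M As = {m \<in> {1..M}. \<forall>m'\<in>{1..M}. Tstat z As m' \<le> Tstat z As m}"

definition Mhat :: "(focus_idx \<Rightarrow> real) \<Rightarrow> nat \<Rightarrow> nat list \<Rightarrow> real \<Rightarrow> nat" where
  "Mhat z M As w = pick (maxset z M As) w"

definition nuhat :: "(focus_idx \<Rightarrow> real) \<Rightarrow> nat list \<Rightarrow> nat \<Rightarrow> nat" where
  "nuhat z As m = obs_time As m (argk (obsv z) m (cnt As m))"

text \<open>sel z M t = [A_1, ..., A_t].\<close>
fun sel :: "(focus_idx \<Rightarrow> real) \<Rightarrow> nat \<Rightarrow> nat \<Rightarrow> nat list" where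
  "sel z M 0 = []"
| "sel z M (Suc t) =
     (let As = sel z M t;
          Mp = Mhat z M As (unif z 2 t);
          nu = nuhat z As Mp;
          eps = min 1 (real M / (max 1 (real (Suc t) - real nu)) powr (1/3));
          A = (if unif z 0 (Suc t) < eps then pick {1..M} (unif z 1 (Suc t)) else Mp)
      in As @ [A])"

end

theory Submission
  imports Defs
begin

(* Only stream 2, which never changes, matters: the event forces T_t^(2) >= c, where
   c = mu_1^2 t^(2/3) / 8, i.e. some window of n - k <= t standard normal observations of
   stream 2 has squared sum >= 2 c (n - k). By the Chernoff bound each of the t (t + 1) / 2
   windows does so with probability at most 2 exp (-c), whatever the random sampling times. *)

definition has_large_window :: "(nat \<Rightarrow> real) \<Rightarrow> real \<Rightarrow> nat \<Rightarrow> bool" where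
  "has_large_window x c t \<longleftrightarrow> (\<exists>n\<in>{1..t}. \<exists>k<n. 2 * c * real (n - k) \<le> (\<Sum>i\<in>{k+1..n}. x i)\<^sup>2)"

lemma has_large_window_if_glr_ge:
  assumes "0 < c" "c \<le> glr Y m n" "n \<le> t"
  shows "has_large_window (Y m) c t"
proof -
  have "n \<noteq> 0" using assms(1,2) unfolding glr_def by (auto split: if_splits)
  then have "c \<le> Max (glr_val Y m n ` {..<n})" using assms(2) unfolding glr_def by simp
  then obtain k where "k < n" "c \<le> glr_val Y m n k"
    using \<open>n \<noteq> 0\<close> by (subst (asm) Max_ge_iff) auto
  then have "2 * c * real (n - k) \<le> (\<Sum>i\<in>{k+1..n}. Y m i)\<^sup>2"
    unfolding glr_val_def by (simp add: pos_le_divide_eq algebra_simps)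
  with \<open>k < n\<close> \<open>n \<le> t\<close> show ?thesis unfolding has_large_window_def by force
qed

lemma cnt_sel_le: "cnt (sel z M t) m \<le> t"
proof -
  have "length (sel z M t) = t" by (induction t) (simp_all add: Let_def)
  then show ?thesis unfolding cnt_def by (metis length_filter_le)
qed

lemma has_large_window_if_Tstat_ge:
  "0 < c \<Longrightarrow> c \<le> Tstat z (sel z M t) m \<Longrightarrow> has_large_window (obsv z m) c t"
  unfolding Tstat_def by (rule has_large_window_if_glr_ge[OF _ _ cnt_sel_le])

lemma normal_density_mult_exp:
  "normal_density 0 1 x * exp (s * x) = exp (s\<^sup>2 / 2) * normal_density s 1 x"
  by (simp add: normal_density_def mult_exp_exp power2_eq_square algebra_simps) (simp add: field_simps)

context prob_space
begin

lemma indep_sets_reindex: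
  assumes "inj_on f I" "indep_sets F (f ` I)"
  shows "indep_sets (\<lambda>i. F (f i)) I"
  unfolding indep_sets_def
proof (intro conjI ballI allI impI)
  show "F (f i) \<subseteq> events" if "i \<in> I" for i
    using assms(2) that by (auto simp: indep_sets_def)
  fix J A assume J: "J \<subseteq> I" "J \<noteq> {}" "finite J" and A: "A \<in> (\<Pi> j\<in>J. F (f j))"
  define A' where "A' = (\<lambda>j. A (the_inv_into J f j))"
  have inj: "inj_on f J" using assms(1) J(1) by (rule inj_on_subset)
  have A'f: "A' (f j) = A j" if "j \<in> J" for j
    unfolding A'_def using the_inv_into_f_f[OF inj that] by simp
  have "A' \<in> (\<Pi> j\<in>f ` J. F j)" using A by (auto simp: A'f)
  moreover have "f ` J \<subseteq> f ` I" "f ` J \<noteq> {}" "finite (f ` J)" using J by auto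
  ultimately have "prob (\<Inter>j\<in>f ` J. A' j) = (\<Prod>j\<in>f ` J. prob (A' j))"
    using assms(2) unfolding indep_sets_def by blast
  then show "prob (\<Inter>j\<in>J. A j) = (\<Prod>j\<in>J. prob (A j))"
    by (simp add: prod.reindex[OF inj] A'f)
qed

lemma indep_vars_reindex:
  assumes "inj_on f I" "indep_vars M' X (f ` I)"
  shows "indep_vars (\<lambda>i. M' (f i)) (\<lambda>i. X (f i)) I"
  using assms unfolding indep_vars_def by (auto intro: indep_sets_reindex)

lemma std_normal_mgf:
  assumes "distributed M lborel X (\<lambda>x. ennreal (normal_density 0 1 x))"
  shows "integrable M (\<lambda>\<omega>. exp (s * X \<omega>))"
    and "expectation (\<lambda>\<omega>. exp (s * X \<omega>)) = exp (s\<^sup>2 / 2)"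
proof -
  have "integrable lborel (\<lambda>x. normal_density 0 1 x * exp (s * x))"
    unfolding normal_density_mult_exp by simp
  then show "integrable M (\<lambda>\<omega>. exp (s * X \<omega>))"
    using distributed_integrable[OF assms, of "\<lambda>x. exp (s * x)"] by simp
  have "(\<integral>x. normal_density 0 1 x * exp (s * x) \<partial>lborel) = exp (s\<^sup>2 / 2)"
    unfolding normal_density_mult_exp by simp
  then show "expectation (\<lambda>\<omega>. exp (s * X \<omega>)) = exp (s\<^sup>2 / 2)"
    using distributed_integral[OF assms, of "\<lambda>x. exp (s * x)"] by simp
qed

lemma std_normal_sum_mgf:
  assumes ind: "indep_vars (\<lambda>_. borel) X J" and fin: "finite J"
    and std: "\<And>i. i \<in> J \<Longrightarrow> distributed M lborel (X i) (\<lambda>x. ennreal (normal_density 0 1 x))"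
  shows "integrable M (\<lambda>\<omega>. exp (s * (\<Sum>i\<in>J. X i \<omega>)))"
    and "expectation (\<lambda>\<omega>. exp (s * (\<Sum>i\<in>J. X i \<omega>))) = exp (real (card J) * s\<^sup>2 / 2)"
proof -
  have prod: "(\<lambda>\<omega>. exp (s * (\<Sum>i\<in>J. X i \<omega>))) = (\<lambda>\<omega>. \<Prod>i\<in>J. exp (s * X i \<omega>))"
    by (simp add: sum_distrib_left exp_sum[OF fin])
  have ind_exp: "indep_vars (\<lambda>_. borel) (\<lambda>i \<omega>. exp (s * X i \<omega>)) J"
    using indep_vars_compose2[OF ind, of "\<lambda>i x. exp (s * x)" "\<lambda>_. borel"] by simp
  show "integrable M (\<lambda>\<omega>. exp (s * (\<Sum>i\<in>J. X i \<omega>)))"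
    unfolding prod using indep_vars_integrable[OF fin ind_exp] std_normal_mgf(1)[OF std] by blast
  have "expectation (\<lambda>\<omega>. exp (s * (\<Sum>i\<in>J. X i \<omega>))) = (\<Prod>i\<in>J. expectation (\<lambda>\<omega>. exp (s * X i \<omega>)))"
    unfolding prod using indep_vars_lebesgue_integral[OF fin ind_exp] std_normal_mgf(1)[OF std] by blast
  also have "\<dots> = exp (s\<^sup>2 / 2) ^ card J"
    using std_normal_mgf(2)[OF std] by simp
  finally show "expectation (\<lambda>\<omega>. exp (s * (\<Sum>i\<in>J. X i \<omega>))) = exp (real (card J) * s\<^sup>2 / 2)"
    by (simp add: exp_of_nat_mult[symmetric])
qed

lemma std_normal_sum_sq_tail:
  assumes ind: "indep_vars (\<lambda>_. borel) X J" and fin: "finite J" and "J \<noteq> {}" and "c > 0"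
    and std: "\<And>i. i \<in> J \<Longrightarrow> distributed M lborel (X i) (\<lambda>x. ennreal (normal_density 0 1 x))"
  shows "prob {\<omega>\<in>space M. 2 * c * real (card J) \<le> (\<Sum>i\<in>J. X i \<omega>)\<^sup>2} \<le> 2 * exp (- c)"
proof -
  define j where "j = real (card J)"
  define s where "s = sqrt (2 * c / j)"
  define S where "S = (\<lambda>\<omega>. \<Sum>i\<in>J. X i \<omega>)"
  have "j > 0" using fin \<open>J \<noteq> {}\<close> unfolding j_def by (simp add: card_gt_0_iff)
  then have "s > 0" and s2: "s\<^sup>2 = 2 * c / j"
    using \<open>c > 0\<close> unfolding s_def by simp_all
  have js2: "j * s\<^sup>2 = 2 * c" using \<open>j > 0\<close> s2 by simp
  then have tail: "exp (- (s * (j * s))) * exp (j * s\<^sup>2 / 2) = exp (- c)"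
    by (simp add: mult_exp_exp power2_eq_square algebra_simps)
  have mgf: "integrable M (\<lambda>\<omega>. exp (r * S \<omega>))" "expectation (\<lambda>\<omega>. exp (r * S \<omega>)) = exp (j * r\<^sup>2 / 2)"
    for r using std_normal_sum_mgf[OF ind fin std] unfolding S_def j_def by blast+
  have set_mgf: "set_integrable M (space M) (\<lambda>\<omega>. exp (r * S \<omega>))"
    "(\<integral>\<omega>\<in>space M. exp (r * S \<omega>) \<partial>M) = exp (j * r\<^sup>2 / 2)" for r
    using integrable_mult_indicator[OF sets.top mgf(1)] mgf(2)
    by (simp_all add: set_integrable_def set_integral_space[OF mgf(1)])
  have "S \<in> borel_measurable M"
    unfolding S_def using distributed_measurable[OF std] by (intro borel_measurable_sum) simp
  have "2 * c * j \<le> y\<^sup>2 \<longleftrightarrow> j * s \<le> y \<or> y \<le> - (j * s)" for y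
  proof -
    have "2 * c * j = (j * s)\<^sup>2"
      using js2 by (simp add: power_mult_distrib power2_eq_square algebra_simps)
    then show ?thesis
      using abs_le_square_iff[of "j * s" y] \<open>j > 0\<close> \<open>s > 0\<close> by auto
  qed
  then have "{\<omega>\<in>space M. 2 * c * j \<le> (S \<omega>)\<^sup>2}
      = {\<omega>\<in>space M. j * s \<le> S \<omega>} \<union> {\<omega>\<in>space M. S \<omega> \<le> - (j * s)}"
    by auto
  then have "prob {\<omega>\<in>space M. 2 * c * j \<le> (S \<omega>)\<^sup>2}
      \<le> prob {\<omega>\<in>space M. j * s \<le> S \<omega>} + prob {\<omega>\<in>space M. S \<omega> \<le> - (j * s)}"
    using \<open>S \<in> borel_measurable M\<close> by (simp add: measure_Un_le)
  also have "prob {\<omega>\<in>space M. j * s \<le> S \<omega>} \<le> exp (- c)"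
    using Chernoff_ineq_ge[OF \<open>s > 0\<close> set_mgf(1), of "j * s"] set_mgf(2)[of s] tail by simp
  also have "prob {\<omega>\<in>space M. S \<omega> \<le> - (j * s)} \<le> exp (- c)"
    using Chernoff_ineq_le[OF \<open>s > 0\<close>, of "space M" S "- (j * s)"] set_mgf[of "- s"] tail by simp
  finally show ?thesis unfolding S_def j_def by simp
qed

lemma std_normal_has_large_window:
  fixes X :: "nat \<Rightarrow> 'a \<Rightarrow> real"
  assumes ind: "indep_vars (\<lambda>_. borel) X {1..}" and "c > 0"
    and std: "\<And>i. 1 \<le> i \<Longrightarrow> distributed M lborel (X i) (\<lambda>x. ennreal (normal_density 0 1 x))"
  shows "{\<omega>\<in>space M. has_large_window (\<lambda>i. X i \<omega>) c t} \<in> events"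
    and "prob {\<omega>\<in>space M. has_large_window (\<lambda>i. X i \<omega>) c t} \<le> real t * real (t + 1) * exp (- c)"
proof -
  define W where "W n k = {\<omega>\<in>space M. 2 * c * real (n - k) \<le> (\<Sum>i\<in>{k+1..n}. X i \<omega>)\<^sup>2}" for n k
  have W_events: "W n k \<in> events" for n k
  proof -
    have "(\<lambda>\<omega>. \<Sum>i\<in>{k+1..n}. X i \<omega>) \<in> borel_measurable M"
      using distributed_measurable[OF std] by (intro borel_measurable_sum) simp
    then show ?thesis unfolding W_def by measurable
  qed
  have W_prob: "prob (W n k) \<le> 2 * exp (- c)" if "k < n" for n k
    using std_normal_sum_sq_tail[OF indep_vars_subset[OF ind] _ _ \<open>c > 0\<close> std, of "{k+1..n}"] that
    unfolding W_def by auto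
  have windows: "{\<omega>\<in>space M. has_large_window (\<lambda>i. X i \<omega>) c t} = (\<Union>n\<in>{1..t}. \<Union>k<n. W n k)"
    unfolding has_large_window_def W_def by blast
  show "{\<omega>\<in>space M. has_large_window (\<lambda>i. X i \<omega>) c t} \<in> events"
    unfolding windows using W_events by auto
  have "prob (\<Union>n\<in>{1..t}. \<Union>k<n. W n k) \<le> (\<Sum>n\<in>{1..t}. prob (\<Union>k<n. W n k))"
    using W_events by (intro finite_measure_subadditive_finite) auto
  also have "\<dots> \<le> (\<Sum>n\<in>{1..t}. \<Sum>k<n. prob (W n k))"
    using W_events by (intro sum_mono finite_measure_subadditive_finite) auto
  also have "\<dots> \<le> (\<Sum>n\<in>{1..t}. \<Sum>k<n. 2 * exp (- c))"
    using W_prob by (intro sum_mono) auto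
  also have "\<dots> = (2 * (\<Sum>n\<in>{1..t}. real n)) * exp (- c)"
    by (simp add: sum_distrib_left sum_distrib_right mult_ac)
  also have "\<dots> = real t * real (t + 1) * exp (- c)"
    using double_gauss_sum_from_Suc_0[of t, where 'a=real] by simp
  finally show "prob {\<omega>\<in>space M. has_large_window (\<lambda>i. X i \<omega>) c t} \<le> real t * real (t + 1) * exp (- c)"
    unfolding windows .
qed

end

theorem lemma3:
  fixes P :: "'a measure" and Z :: "focus_idx \<Rightarrow> 'a \<Rightarrow> real"
    and M :: nat and \<mu>1 :: real and t :: nat
  assumes "prob_space P"
    and "M > 1"
    and "\<mu>1 \<noteq> 0"
    and "prob_space.indep_vars P (\<lambda>_. borel) Z (focus_index M)"
    and "\<And>i. 1 \<le> i \<Longrightarrow> distributed P lborel (Z (Inl (1, i))) (\<lambda>x. ennreal (normal_density \<mu>1 1 x))"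
    and "\<And>m i. m \<in> {2..M} \<Longrightarrow> 1 \<le> i \<Longrightarrow>
           distributed P lborel (Z (Inl (m, i))) (\<lambda>x. ennreal (normal_density 0 1 x))"
    and "\<And>j s. j < 3 \<Longrightarrow> distributed P lborel (Z (Inr (j, s))) (\<lambda>x. indicator {0..1::real} x)"
    and "1 \<le> t"
  shows "measure P {\<omega> \<in> space P.
           let z = (\<lambda>k. Z k \<omega>); As = sel z M t
           in Tstat z As 2 \<ge> Tstat z As 1 \<and> Tstat z As 1 \<ge> \<mu>1\<^sup>2 * real t powr (2/3) / 8}
         \<le> real t * real (t + 1) * exp (- (\<mu>1\<^sup>2 * real t powr (2/3) / 8))"
proof -
  interpret prob_space P by fact
  define c where "c = \<mu>1\<^sup>2 * real t powr (2/3) / 8"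
  have "c > 0" unfolding c_def using assms(3,8) by simp
  let ?X = "\<lambda>i. Z (Inl (2, i))"
  have std: "distributed P lborel (?X i) (\<lambda>x. ennreal (normal_density 0 1 x))" if "1 \<le> i" for i
    using assms(6)[of 2 i] assms(2) that by simp
  have "(\<lambda>i. Inl (2, i)) ` {1..} \<subseteq> focus_index M"
    using assms(2) by (auto simp: focus_index_def)
  then have ind: "indep_vars (\<lambda>_. borel) ?X {1..}"
    using indep_vars_reindex[of "\<lambda>i. Inl (2, i)", OF _ indep_vars_subset[OF assms(4)]]
    by (simp add: inj_on_def)
  have "{\<omega> \<in> space P.
           let z = (\<lambda>k. Z k \<omega>); As = sel z M t
           in Tstat z As 2 \<ge> Tstat z As 1 \<and> Tstat z As 1 \<ge> c}
      \<subseteq> {\<omega>\<in>space P. has_large_window (\<lambda>i. ?X i \<omega>) c t}"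
    using has_large_window_if_Tstat_ge[OF \<open>c > 0\<close>, of "\<lambda>k. Z k _" M t 2]
    by (auto simp: Let_def obsv_def[abs_def])
  then show ?thesis
    unfolding c_def[symmetric]
    using finite_measure_mono std_normal_has_large_window[OF ind \<open>c > 0\<close> std] by (blast intro: order_trans)
qed

end
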